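(* Let $\mathcal{R}$ be any resolute voting rule. Every $2$-by-$2$ GS-game under $\mathcal{R}$ has at least one Nash equilibrium in pure strategies.
   Context: Voters have strict linear orders over a finite candidate set $C$; $\mathcal{R}$ maps each preference profile to a winning candidate. $(V_{-i},v_i')$ is $V$ with $v_i$ replaced by $v_i'$. A GS-manipulation of voter $i$ at profile $V$ is a vote $v_i'$ such that $i$ strictly prefers $\mathcal{R}(V_{-i},v_i')$ to $\mathcal{R}(V)$ and for every vote $v_i''$ either $\mathcal{R}(V_{-i},v_i'')=\mathcal{R}(V_{-i},v_i')$ or $i$ strictly prefers $\mathcal{R}(V_{-i},v_i')$ to $\mathcal{R}(V_{-i},v_i'')$; $i$ is a GS-manipulator if he has one. A GS-game for $V$: players are all GS-manipulators at $V$; player $i$'s action set consists of his sincere vote $v_i$ and a subset of his GS-manipulations; other voters vote sincerely; each player compares action profiles by his preference over the resulting winners. A $2$-by-$2$ GS-game is one with exactly two players, each having exactly two actions (his sincere vote and one GS-manipulation). A pure Nash equilibrium is an action profile at which no player can switch to his other action and obtain a winner he strictly prefers. *)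

theory Defs
  imports Main
begin

text \<open>A vote is a strict linear order on all candidates; (a,b) in the vote means a is preferred to b.\<close>

definition is_vote :: "'c rel \<Rightarrow> bool" where
  "is_vote r \<longleftrightarrow> strict_linear_order r"

definition is_profile :: "('v \<Rightarrow> 'c rel) \<Rightarrow> bool" where
  "is_profile V \<longleftrightarrow> (\<forall>i. is_vote (V i))"

definition GS_manipulation ::
  "(('v \<Rightarrow> 'c rel) \<Rightarrow> 'c) \<Rightarrow> ('v \<Rightarrow> 'c rel) \<Rightarrow> 'v \<Rightarrow> 'c rel \<Rightarrow> bool" where
  "GS_manipulation R V i v' \<longleftrightarrow>
     is_vote v' \<and>
     (R (V(i := v')), R V) \<in> V i \<and>
     (\<forall>v''. is_vote v'' \<longrightarrow>
        R (V(i := v'')) = R (V(i := v')) \<or> (R (V(i := v')), R (V(i := v''))) \<in> V i)"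

definition GS_manipulator :: "(('v \<Rightarrow> 'c rel) \<Rightarrow> 'c) \<Rightarrow> ('v \<Rightarrow> 'c rel) \<Rightarrow> 'v \<Rightarrow> bool" where
  "GS_manipulator R V i \<longleftrightarrow> (\<exists>v'. GS_manipulation R V i v')"

text \<open>A 2-by-2 GS-game for V: the GS-manipulators are exactly the two distinct voters i, j;
player i has actions {V i, mi} and player j has actions {V j, mj}, where mi, mj are GS-manipulations.\<close>

definition two_by_two_GS_game ::
  "(('v \<Rightarrow> 'c rel) \<Rightarrow> 'c) \<Rightarrow> ('v \<Rightarrow> 'c rel) \<Rightarrow> 'v \<Rightarrow> 'v \<Rightarrow> 'c rel \<Rightarrow> 'c rel \<Rightarrow> bool" where
  "two_by_two_GS_game R V i j mi mj \<longleftrightarrow>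
     i \<noteq> j \<and> {k. GS_manipulator R V k} = {i, j} \<and>
     GS_manipulation R V i mi \<and> GS_manipulation R V j mj"

definition game_outcome ::
  "(('v \<Rightarrow> 'c rel) \<Rightarrow> 'c) \<Rightarrow> ('v \<Rightarrow> 'c rel) \<Rightarrow> 'v \<Rightarrow> 'v \<Rightarrow> 'c rel \<Rightarrow> 'c rel \<Rightarrow> 'c" where
  "game_outcome R V i j ai aj = R (V(i := ai, j := aj))"

definition pure_NE_2x2 ::
  "(('v \<Rightarrow> 'c rel) \<Rightarrow> 'c) \<Rightarrow> ('v \<Rightarrow> 'c rel) \<Rightarrow> 'v \<Rightarrow> 'v \<Rightarrow> 'c rel \<Rightarrow> 'c rel
     \<Rightarrow> 'c rel \<Rightarrow> 'c rel \<Rightarrow> bool" where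
  "pure_NE_2x2 R V i j mi mj ai aj \<longleftrightarrow>
     ai \<in> {V i, mi} \<and> aj \<in> {V j, mj} \<and>
     (\<forall>bi \<in> {V i, mi}. (game_outcome R V i j bi aj, game_outcome R V i j ai aj) \<notin> V i) \<and>
     (\<forall>bj \<in> {V j, mj}. (game_outcome R V i j ai bj, game_outcome R V i j ai aj) \<notin> V j)"

end

theory Submission
  imports Defs
begin

text \<open>In the 2-by-2 game each player, facing a sincere opponent, strictly gains by
manipulating. Hence either the manipulation of one player is a best reply to the sincerity
of the other, or both players strictly prefer the outcome of joint manipulation to the
outcome of manipulating alone, which makes joint manipulation an equilibrium.\<close>

lemma vote_asym: "is_vote r \<Longrightarrow> (a, b) \<in> r \<Longrightarrow> (b, a) \<notin> r"
  unfolding is_vote_def strict_linear_order_on_def irrefl_def trans_def by blast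

lemma vote_irrefl: "is_vote r \<Longrightarrow> (a, a) \<notin> r"
  unfolding is_vote_def strict_linear_order_on_def irrefl_def by blast

lemma GS_manipulation_improves:
  "GS_manipulation R V i v' \<Longrightarrow> (R (V(i := v')), R V) \<in> V i"
  unfolding GS_manipulation_def by blast

lemma game_outcome_sincere: "game_outcome R V i j (V i) (V j) = R V"
  unfolding game_outcome_def by simp

lemma game_outcome_sincere_right:
  "i \<noteq> j \<Longrightarrow> game_outcome R V i j ai (V j) = R (V(i := ai))"
  unfolding game_outcome_def by (metis fun_upd_triv fun_upd_twist fun_upd_upd)

lemma game_outcome_sincere_left: "game_outcome R V i j (V i) aj = R (V(j := aj))"
  unfolding game_outcome_def by simp

lemma pure_NE_2x2_exists_if_deviations_improve:
  assumes vi: "is_vote (V i)" and vj: "is_vote (V j)"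
    and dev_i: "(game_outcome R V i j mi (V j), game_outcome R V i j (V i) (V j)) \<in> V i"
    and dev_j: "(game_outcome R V i j (V i) mj, game_outcome R V i j (V i) (V j)) \<in> V j"
  shows "\<exists>ai aj. pure_NE_2x2 R V i j mi mj ai aj"
proof -
  let ?g = "game_outcome R V i j"
  note irrefl = vote_irrefl[OF vi] vote_irrefl[OF vj]
  consider "(?g mi mj, ?g mi (V j)) \<notin> V j"
    | "(?g mi mj, ?g (V i) mj) \<notin> V i"
    | "(?g mi mj, ?g mi (V j)) \<in> V j" "(?g mi mj, ?g (V i) mj) \<in> V i"
    by blast
  then show ?thesis
  proof cases
    case 1
    then have "pure_NE_2x2 R V i j mi mj mi (V j)"
      using vote_asym[OF vi dev_i] irrefl unfolding pure_NE_2x2_def by auto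
    then show ?thesis by blast
  next
    case 2
    then have "pure_NE_2x2 R V i j mi mj (V i) mj"
      using vote_asym[OF vj dev_j] irrefl unfolding pure_NE_2x2_def by auto
    then show ?thesis by blast
  next
    case 3
    then have "pure_NE_2x2 R V i j mi mj mi mj"
      using vote_asym[OF vj 3(1)] vote_asym[OF vi 3(2)] irrefl
      unfolding pure_NE_2x2_def by auto
    then show ?thesis by blast
  qed
qed

theorem mainTheorem7:
  fixes R :: "('v::finite \<Rightarrow> 'c::finite rel) \<Rightarrow> 'c"
    and V :: "'v \<Rightarrow> 'c rel"
  assumes "is_profile V"
    and "two_by_two_GS_game R V i j mi mj"
  shows "\<exists>ai aj. pure_NE_2x2 R V i j mi mj ai aj"
proof (rule pure_NE_2x2_exists_if_deviations_improve)
  show "is_vote (V i)" "is_vote (V j)"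
    using assms(1) unfolding is_profile_def by auto
  have "i \<noteq> j" "GS_manipulation R V i mi" "GS_manipulation R V j mj"
    using assms(2) unfolding two_by_two_GS_game_def by auto
  then show "(game_outcome R V i j mi (V j), game_outcome R V i j (V i) (V j)) \<in> V i"
    and "(game_outcome R V i j (V i) mj, game_outcome R V i j (V i) (V j)) \<in> V j"
    by (simp_all add: game_outcome_sincere game_outcome_sincere_right
        game_outcome_sincere_left GS_manipulation_improves)
qed

end
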